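(* Let $\{A,S_0,\Pi_0\}$ be an admissible triple with $\pm\mathrm{i}\notin\sigma(A)$, and write $\Pi_0=\begin{bmatrix}\vartheta_1&\vartheta_2\end{bmatrix}$. Then for all $k\ge0$ $$\Pi_k=\begin{bmatrix}(I_n+\mathrm{i} A^{-1})^k\vartheta_1 & (I_n-\mathrm{i} A^{-1})^k\vartheta_2\end{bmatrix},$$ and with $R_k:=(I_n+\mathrm{i} A^{-1})^{-k}S_k\big(I_n-\mathrm{i}(A^* )^{-1}\big)^{-k}$ and $Q_k:=(I_n-\mathrm{i} A^{-1})^{-k}S_k\big(I_n+\mathrm{i}(A^* )^{-1}\big)^{-k}$ one has $$R_{k+1}-R_k=2(I_n+\mathrm{i} A^{-1})^{-k-1}A^{-1}(I_n-\mathrm{i} A^{-1})^k\vartheta_2\vartheta_2^*\big((I_n-\mathrm{i} A^{-1})^k\big)^*(A^{-1})^*\big((I_n+\mathrm{i} A^{-1})^{-k-1}\big)^*\ge0,$$ and $Q_{k+1}-Q_k\ge0$. Consequently the limits $\varkappa_R:=\lim_{k\to\infty}R_k^{-1}\ge0$ and $\varkappa_Q:=\lim_{k\to\infty}Q_k^{-1}\ge0$ exist.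
   Context: Fix positive integers $m_1,m_2$, $m=m_1+m_2$, $j=\mathrm{diag}(I_{m_1},-I_{m_2})$, $n\in\mathbb{N}$. An admissible triple (self-adjoint case) consists of an $n\times n$ matrix $A$ with $\det A\ne0$, an $n\times n$ matrix $S_0>0$, and an $n\times m$ matrix $\Pi_0$ with $AS_0-S_0A^*=\mathrm{i}\,\Pi_0j\Pi_0^*$; $\vartheta_1,\vartheta_2$ are the $n\times m_1$ and $n\times m_2$ blocks of $\Pi_0$. The sequences are defined for $k\ge0$ by $\Pi_{k+1}=\Pi_k+\mathrm{i} A^{-1}\Pi_k j$ and $S_{k+1}=S_k+A^{-1}S_k(A^* )^{-1}+A^{-1}\Pi_k\Pi_k^*(A^* )^{-1}$ (so $S_k>0$ and $AS_k-S_kA^*=\mathrm{i}\Pi_kj\Pi_k^*$ for all $k$). $\sigma(A)$ is the spectrum of $A$. *)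

theory Defs
  imports "HOL-Analysis.Analysis"
begin

text \<open>Complex matrices are rendered as complex^'c::finite^'r::finite (r rows, c columns, type-indexed
dimensions). Matrix product is (**), identity is mat 1, inverse is matrix_inv.\<close>

definition cmat_adj :: "complex^'c::finite^'r::finite \<Rightarrow> complex^'r::finite^'c::finite" where
  "cmat_adj M = (\<chi> i j. cnj (M $ j $ i))"

definition cmat_smult :: "complex \<Rightarrow> complex^'c::finite^'r::finite \<Rightarrow> complex^'c::finite^'r::finite" where
  "cmat_smult c M = (\<chi> i j. c * M $ i $ j)"

primrec cmat_pow :: "complex^'n::finite^'n \<Rightarrow> nat \<Rightarrow> complex^'n::finite^'n" where
  "cmat_pow M 0 = mat 1"
| "cmat_pow M (Suc k) = cmat_pow M k ** M"

definition hermitian :: "complex^'n::finite^'n \<Rightarrow> bool" where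
  "hermitian M \<longleftrightarrow> cmat_adj M = M"

definition pos_def :: "complex^'n::finite^'n \<Rightarrow> bool" where
  "pos_def M \<longleftrightarrow> hermitian M \<and> (\<forall>x. x \<noteq> 0 \<longrightarrow> Re (\<Sum>i\<in>UNIV. cnj (x $ i) * (M *v x) $ i) > 0 )"

definition pos_semidef :: "complex^'n::finite^'n \<Rightarrow> bool" where
  "pos_semidef M \<longleftrightarrow> hermitian M \<and> (\<forall>x. Re (\<Sum>i\<in>UNIV. cnj (x $ i) * (M *v x) $ i) \<ge> 0)"

definition cmat_spectrum :: "complex^'n::finite^'n \<Rightarrow> complex set" where
  "cmat_spectrum A = {z. det (A - cmat_smult z (mat 1)) = 0}"

definition jmat :: "complex^('m1::finite + 'm2::finite)^('m1::finite + 'm2::finite)" where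
  "jmat = (\<chi> a b. if a = b then (case a of Inl _ \<Rightarrow> 1 | Inr _ \<Rightarrow> -1) else 0)"

definition admissible_triple ::
  "complex^'n::finite^'n \<Rightarrow> complex^'n::finite^'n \<Rightarrow> complex^('m1::finite + 'm2::finite)^'n \<Rightarrow> bool" where
  "admissible_triple A S0 Pi0 \<longleftrightarrow> det A \<noteq> 0 \<and> pos_def S0 \<and>
     A ** S0 - S0 ** cmat_adj A = cmat_smult \<i> (Pi0 ** jmat ** cmat_adj Pi0)"

primrec Pi_seq :: "complex^'n::finite^'n \<Rightarrow> complex^('m1::finite + 'm2::finite)^'n \<Rightarrow> nat \<Rightarrow> complex^('m1::finite + 'm2::finite)^'n" where
  "Pi_seq A Pi0 0 = Pi0"
| "Pi_seq A Pi0 (Suc k) = Pi_seq A Pi0 k + cmat_smult \<i> (matrix_inv A ** Pi_seq A Pi0 k ** jmat)"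

primrec S_seq :: "complex^'n::finite^'n \<Rightarrow> complex^'n::finite^'n \<Rightarrow> complex^('m1::finite + 'm2::finite)^'n \<Rightarrow> nat \<Rightarrow> complex^'n::finite^'n" where
  "S_seq A S0 Pi0 0 = S0"
| "S_seq A S0 Pi0 (Suc k) = S_seq A S0 Pi0 k
     + matrix_inv A ** S_seq A S0 Pi0 k ** matrix_inv (cmat_adj A)
     + matrix_inv A ** Pi_seq A Pi0 k ** cmat_adj (Pi_seq A Pi0 k) ** matrix_inv (cmat_adj A)"

definition block1 :: "complex^('m1::finite + 'm2::finite)^'n \<Rightarrow> complex^'m1::finite^'n::finite" where
  "block1 P = (\<chi> r c. P $ r $ Inl c)"
definition block2 :: "complex^('m1::finite + 'm2::finite)^'n \<Rightarrow> complex^'m2::finite^'n::finite" where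
  "block2 P = (\<chi> r c. P $ r $ Inr c)"
definition join_blocks :: "complex^'m1::finite^'n::finite \<Rightarrow> complex^'m2::finite^'n::finite \<Rightarrow> complex^('m1::finite + 'm2::finite)^'n" where
  "join_blocks X Y = (\<chi> r c. case c of Inl a \<Rightarrow> X $ r $ a | Inr b \<Rightarrow> Y $ r $ b)"

definition Bp :: "complex^'n::finite^'n \<Rightarrow> complex^'n::finite^'n" where
  "Bp A = mat 1 + cmat_smult \<i> (matrix_inv A)"
definition Bm :: "complex^'n::finite^'n \<Rightarrow> complex^'n::finite^'n" where
  "Bm A = mat 1 - cmat_smult \<i> (matrix_inv A)"

definition R_seq :: "complex^'n::finite^'n \<Rightarrow> complex^'n::finite^'n \<Rightarrow> complex^('m1::finite + 'm2::finite)^'n \<Rightarrow> nat \<Rightarrow> complex^'n::finite^'n" where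
  "R_seq A S0 Pi0 k = matrix_inv (cmat_pow (Bp A) k) ** S_seq A S0 Pi0 k
      ** matrix_inv (cmat_pow (mat 1 - cmat_smult \<i> (matrix_inv (cmat_adj A))) k)"
definition Q_seq :: "complex^'n::finite^'n \<Rightarrow> complex^'n::finite^'n \<Rightarrow> complex^('m1::finite + 'm2::finite)^'n \<Rightarrow> nat \<Rightarrow> complex^'n::finite^'n" where
  "Q_seq A S0 Pi0 k = matrix_inv (cmat_pow (Bm A) k) ** S_seq A S0 Pi0 k
      ** matrix_inv (cmat_pow (mat 1 + cmat_smult \<i> (matrix_inv (cmat_adj A))) k)"

end

theory Submission
  imports Defs
begin

text \<open>
  Write \<open>X = A\<^sup>-\<^sup>1\<close>.  The recursion for \<open>\<Pi>\<^sub>k\<close> multiplies the first block by I + iX and the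
  second by I - iX.  The recursion for \<open>S\<^sub>k\<close> preserves the Lyapunov identity
  \<open>A S\<^sub>k - S\<^sub>k A\<^sup>* = i \<Pi>\<^sub>k j \<Pi>\<^sub>k\<^sup>*\<close>, and with its help the update factors as
  \<open>S\<^sub>k\<^sub>+\<^sub>1 = (I + iX) S\<^sub>k (I + iX)\<^sup>* + 2 X \<theta> \<theta>\<^sup>* X\<^sup>*\<close>, where \<open>\<theta>\<close> is the second block of \<open>\<Pi>\<^sub>k\<close>
  (and symmetrically with I - iX and the first block).  Conjugating by the inverse of
  \<open>(I + iX)\<^sup>k\<^sup>+\<^sup>1\<close> turns this into \<open>R\<^sub>k\<^sub>+\<^sub>1 - R\<^sub>k = 2 C C\<^sup>*\<close>, so \<open>R\<^sub>k\<close> increases and \<open>R\<^sub>k\<^sup>-\<^sup>1\<close>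
  decreases in the Loewner order.  The quadratic forms of \<open>R\<^sub>k\<^sup>-\<^sup>1\<close> then converge by
  monotonicity, and polarization gives convergence of the entries.
\<close>

lemma matrix_add_rdistrib: "((A::'a::semiring_1^'n^'m) + B) ** C = A ** C + B ** C"
  by (vector matrix_matrix_mult_def sum.distrib[symmetric] field_simps)

lemma matrix_diff_ldistrib: "(A::'a::ring_1^'n^'m) ** (B - C) = A ** B - A ** C"
  by (vector matrix_matrix_mult_def sum_subtractf[symmetric] field_simps)

lemma matrix_diff_rdistrib: "((A::'a::ring_1^'n^'m) - B) ** C = A ** C - B ** C"
  by (vector matrix_matrix_mult_def sum_subtractf[symmetric] field_simps)

lemma cmat_smult_mult_left: "cmat_smult c A ** B = cmat_smult c (A ** B)"
  by (simp add: cmat_smult_def matrix_matrix_mult_def vec_eq_iff sum_distrib_left mult.assoc)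

lemma cmat_smult_mult_right: "A ** cmat_smult c B = cmat_smult c (A ** B)"
  by (simp add: cmat_smult_def matrix_matrix_mult_def vec_eq_iff sum_distrib_left algebra_simps)

lemma cmat_smult_smult: "cmat_smult c (cmat_smult d A) = cmat_smult (c * d) A"
  by (simp add: cmat_smult_def vec_eq_iff)

lemma cmat_smult_add: "cmat_smult c (A + B) = cmat_smult c A + cmat_smult c B"
  by (simp add: cmat_smult_def vec_eq_iff algebra_simps)

lemma cmat_smult_diff: "cmat_smult c (A - B) = cmat_smult c A - cmat_smult c B"
  by (simp add: cmat_smult_def vec_eq_iff algebra_simps)

lemma cmat_smult_uminus: "cmat_smult c (- A) = - cmat_smult c A"
  by (simp add: cmat_smult_def vec_eq_iff)

lemma cmat_smult_minus_scalar: "cmat_smult (- c) A = - cmat_smult c A"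
  by (simp add: cmat_smult_def vec_eq_iff)

lemma cmat_smult_one [simp]: "cmat_smult 1 A = A"
  by (simp add: cmat_smult_def vec_eq_iff)

lemma cmat_smult_minus_one [simp]: "cmat_smult (- 1) A = - A"
  by (simp add: cmat_smult_def vec_eq_iff)

lemma cmat_adj_smult: "cmat_adj (cmat_smult c A) = cmat_smult (cnj c) (cmat_adj A)"
  by (simp add: cmat_smult_def cmat_adj_def vec_eq_iff)

lemma cmat_adj_mult: "cmat_adj (A ** B) = cmat_adj B ** cmat_adj A"
  by (simp add: cmat_adj_def matrix_matrix_mult_def vec_eq_iff mult.commute)

lemma cmat_adj_add: "cmat_adj (A + B) = cmat_adj A + cmat_adj B"
  by (simp add: cmat_adj_def vec_eq_iff)

lemma cmat_adj_diff: "cmat_adj (A - B) = cmat_adj A - cmat_adj B"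
  by (simp add: cmat_adj_def vec_eq_iff)

lemma cmat_adj_adj [simp]: "cmat_adj (cmat_adj A) = A"
  by (simp add: cmat_adj_def vec_eq_iff)

lemma cmat_adj_mat_1 [simp]: "cmat_adj (mat 1) = mat 1"
  by (simp add: cmat_adj_def vec_eq_iff mat_def)

lemma matrix_inv_right: "invertible (A::'a::field^'n^'n) \<Longrightarrow> A ** matrix_inv A = mat 1"
  unfolding invertible_def matrix_inv_def by (rule someI2_ex) auto

lemma matrix_inv_left: "invertible (A::'a::field^'n^'n) \<Longrightarrow> matrix_inv A ** A = mat 1"
  unfolding invertible_def matrix_inv_def by (rule someI2_ex) auto

lemma matrix_inv_unique:
  assumes "(A::'a::field^'n^'n) ** B = mat 1"
  shows "matrix_inv A = B"
proof -
  have "invertible A" using assms invertible_right_inverse by blast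
  have "matrix_inv A = matrix_inv A ** (A ** B)" using assms by simp
  also have "\<dots> = B" using matrix_inv_left[OF \<open>invertible A\<close>] by (simp add: matrix_mul_assoc)
  finally show ?thesis .
qed

lemma invertible_matrix_inv: "invertible (A::'a::field^'n^'n) \<Longrightarrow> invertible (matrix_inv A)"
  using matrix_inv_left invertible_right_inverse by blast

lemma matrix_inv_mult:
  "invertible (A::'a::field^'n^'n) \<Longrightarrow> invertible (B::'a^'n^'n) \<Longrightarrow> matrix_inv (A ** B) = matrix_inv B ** matrix_inv A"
  by (rule matrix_inv_unique) (metis matrix_inv_right matrix_mul_assoc matrix_mul_rid)

lemma matrix_inv_cmat_adj:
  "invertible (A::complex^'n^'n) \<Longrightarrow> matrix_inv (cmat_adj A) = cmat_adj (matrix_inv A)"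
  by (metis cmat_adj_mult cmat_adj_mat_1 matrix_inv_left matrix_inv_unique)

lemma cmat_pow_commute: "cmat_pow M k ** M = M ** cmat_pow M k"
  by (induction k) (simp_all, metis matrix_mul_assoc)

lemma invertible_cmat_pow: "invertible M \<Longrightarrow> invertible (cmat_pow M k)"
  by (induction k) (simp_all add: invertible_mult, metis invertible_def matrix_mul_lid)

lemma cmat_pow_adj: "cmat_pow (cmat_adj M) k = cmat_adj (cmat_pow M k)"
  by (induction k) (simp_all add: cmat_adj_mult cmat_pow_commute)

subsection \<open>Positive definite matrices\<close>

definition cdot :: "complex^'n::finite \<Rightarrow> complex^'n \<Rightarrow> complex" where
  "cdot u v = (\<Sum>i\<in>UNIV. cnj (u$i) * v$i)"

lemma pos_def_iff_cdot:
  "pos_def M \<longleftrightarrow> hermitian M \<and> (\<forall>x. x \<noteq> 0 \<longrightarrow> Re (cdot x (M *v x)) > 0)"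
  by (simp add: pos_def_def cdot_def)

lemma pos_semidef_iff_cdot: "pos_semidef M \<longleftrightarrow> hermitian M \<and> (\<forall>x. Re (cdot x (M *v x)) \<ge> 0)"
  by (simp add: pos_semidef_def cdot_def)

lemma cdot_matrix_vector_mult:
  "cdot u ((M::complex^'m::finite^'n::finite) *v w) = cdot (cmat_adj M *v u) w"
proof -
  have "cdot u (M *v w) = (\<Sum>i\<in>UNIV. \<Sum>j\<in>UNIV. cnj (u$i) * M$i$j * w$j)"
    by (simp add: cdot_def matrix_vector_mult_def sum_distrib_left mult.assoc)
  also have "\<dots> = (\<Sum>j\<in>UNIV. \<Sum>i\<in>UNIV. cnj (u$i) * M$i$j * w$j)"
    by (rule sum.swap)
  also have "\<dots> = cdot (cmat_adj M *v u) w"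
    by (simp add: cdot_def matrix_vector_mult_def cmat_adj_def sum_distrib_right sum_distrib_left mult_ac)
  finally show ?thesis .
qed

lemma cdot_add_left: "cdot (u + v) w = cdot u w + cdot v w"
  by (simp add: cdot_def sum.distrib algebra_simps)

lemma cdot_add_right: "cdot w (u + v) = cdot w u + cdot w v"
  by (simp add: cdot_def sum.distrib algebra_simps)

lemma cdot_diff_left: "cdot (u - v) w = cdot u w - cdot v w"
  by (simp add: cdot_def sum_subtractf algebra_simps)

lemma cdot_diff_right: "cdot w (u - v) = cdot w u - cdot w v"
  by (simp add: cdot_def sum_subtractf algebra_simps)

lemma cdot_vector_smult_left: "cdot (c *s u) w = cnj c * cdot u w"
  by (simp add: cdot_def sum_distrib_left algebra_simps)

lemma cdot_vector_smult_right: "cdot w (c *s u) = c * cdot w u"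
  by (simp add: cdot_def sum_distrib_left algebra_simps)

lemma cnj_cdot: "cnj (cdot u v) = cdot v u"
  by (simp add: cdot_def mult.commute)

lemma cdot_zero_left [simp]: "cdot 0 v = 0"
  by (simp add: cdot_def)

lemma Re_cdot_self_nonneg: "Re (cdot u u) \<ge> 0"
proof -
  have "cnj z * z = of_real ((cmod z)^2)" for z
    using complex_norm_square[of z] by (simp add: mult.commute)
  then show ?thesis by (simp add: cdot_def sum_nonneg)
qed

lemma hermitian_cdot_real:
  assumes "hermitian M"
  shows "cdot x (M *v x) = of_real (Re (cdot x (M *v x)))"
proof -
  have "cnj (cdot x (M *v x)) = cdot x (M *v x)"
    using assms by (simp add: cnj_cdot cdot_matrix_vector_mult hermitian_def)
  then show ?thesis by (metis Reals_cnj_iff complex_is_Real_iff of_real_Re)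
qed

lemma pos_def_imp_pos_semidef: "pos_def M \<Longrightarrow> pos_semidef M"
  unfolding pos_def_iff_cdot pos_semidef_iff_cdot
  by (metis cdot_zero_left less_eq_real_def zero_complex.sel(1))

lemma cdot_congruence:
  "cdot x ((C ** M ** cmat_adj C) *v x) = cdot (cmat_adj C *v x) (M *v (cmat_adj C *v x))"
  by (simp add: matrix_vector_mul_assoc[symmetric] cdot_matrix_vector_mult)

lemma hermitian_congruence: "hermitian M \<Longrightarrow> hermitian (C ** M ** cmat_adj C)"
  by (simp add: hermitian_def cmat_adj_mult matrix_mul_assoc)

lemma pos_semidef_congruence: "pos_semidef M \<Longrightarrow> pos_semidef (C ** M ** cmat_adj C)"
  by (simp add: pos_semidef_iff_cdot hermitian_congruence cdot_congruence)

lemma pos_def_congruence: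
  fixes M C :: "complex^'n^'n"
  assumes M: "pos_def M" and C: "invertible C"
  shows "pos_def (C ** M ** cmat_adj C)"
  unfolding pos_def_iff_cdot
proof (intro conjI allI impI)
  show "hermitian (C ** M ** cmat_adj C)" using M hermitian_congruence pos_def_def by blast
  fix x :: "complex^'n" assume "x \<noteq> 0"
  have "cmat_adj (matrix_inv C) ** cmat_adj C = mat 1"
    by (simp add: C matrix_inv_right flip: cmat_adj_mult)
  then have "cmat_adj C *v x \<noteq> 0"
    using \<open>x \<noteq> 0\<close> by (metis matrix_vector_mul_assoc matrix_vector_mul_lid matrix_vector_mult_0_right)
  then show "0 < Re (cdot x ((C ** M ** cmat_adj C) *v x))"
    using M by (simp add: pos_def_iff_cdot cdot_congruence)
qed

lemma pos_semidef_gram: "pos_semidef (C ** cmat_adj C)"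
proof -
  have "cdot x ((C ** cmat_adj C) *v x) = cdot (cmat_adj C *v x) (cmat_adj C *v x)" for x
    by (simp add: matrix_vector_mul_assoc[symmetric] cdot_matrix_vector_mult[of x C])
  then show ?thesis
    by (simp add: pos_semidef_iff_cdot hermitian_def cmat_adj_mult Re_cdot_self_nonneg)
qed

lemma pos_semidef_double_gram: "pos_semidef (cmat_smult 2 (C ** cmat_adj C))"
proof -
  have "cmat_smult 2 (C ** cmat_adj C) = (cmat_smult 2 C) ** cmat_adj C"
    by (simp add: cmat_smult_mult_left)
  also have "\<dots> = cmat_smult (sqrt 2) C ** cmat_adj (cmat_smult (sqrt 2) C)"
    by (simp add: cmat_adj_smult cmat_smult_mult_left cmat_smult_mult_right cmat_smult_smult
        flip: of_real_mult)
  finally show ?thesis using pos_semidef_gram by metis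
qed

lemma pos_def_add_pos_semidef: "pos_def M \<Longrightarrow> pos_semidef N \<Longrightarrow> pos_def (M + N)"
  unfolding pos_semidef_iff_cdot pos_def_iff_cdot hermitian_def
  by (simp add: cmat_adj_add matrix_vector_mult_add_rdistrib cdot_add_right add_pos_nonneg)

lemma pos_def_invertible: "pos_def (M::complex^'n^'n) \<Longrightarrow> invertible M"
proof -
  assume M: "pos_def M"
  have "inj ((*v) M)"
  proof (rule injI)
    fix x y assume "M *v x = M *v y"
    then have "cdot (x - y) (M *v (x - y)) = 0"
      by (simp add: matrix_vector_mult_diff_distrib cdot_def)
    then show "x = y"
      using M unfolding pos_def_iff_cdot by (metis zero_complex.simps(1) less_irrefl right_minus_eq)
  qed
  then show ?thesis using matrix_left_invertible_injective invertible_left_inverse by blast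
qed

lemma pos_def_matrix_inv: "pos_def (M::complex^'n^'n) \<Longrightarrow> pos_def (matrix_inv M)"
proof -
  assume M: "pos_def M"
  have i: "invertible M" using pos_def_invertible[OF M] .
  have "cmat_adj (matrix_inv M) = matrix_inv M"
    using M by (simp add: pos_def_def hermitian_def flip: matrix_inv_cmat_adj[OF i])
  then have "matrix_inv M = matrix_inv M ** M ** cmat_adj (matrix_inv M)"
    by (simp add: matrix_inv_left[OF i])
  then show ?thesis using pos_def_congruence[OF M invertible_matrix_inv[OF i]] by simp
qed

lemma matrix_inv_antitone:
  fixes A B :: "complex^'n^'n"
  assumes A: "pos_def A" and B: "pos_def B" and BA: "pos_semidef (B - A)"
  shows "pos_semidef (matrix_inv A - matrix_inv B)"
proof -
  have iA: "invertible A" and iB: "invertible B" using A B pos_def_invertible by auto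
  have hA: "cmat_adj A = A" using A by (simp add: pos_def_def hermitian_def)
  have hiA: "cmat_adj (matrix_inv A) = matrix_inv A" and hiB: "cmat_adj (matrix_inv B) = matrix_inv B"
    using pos_def_matrix_inv[OF A] pos_def_matrix_inv[OF B] by (auto simp: pos_def_def hermitian_def)
  have "Re (cdot x (matrix_inv B *v x)) \<le> Re (cdot x (matrix_inv A *v x))" for x
  proof -
    define y where "y = matrix_inv B *v x"
    define a where "a = matrix_inv A *v x"
    have By: "B *v y = x" by (simp add: y_def matrix_vector_mul_assoc matrix_inv_right[OF iB])
    have Aa: "A *v a = x" by (simp add: a_def matrix_vector_mul_assoc matrix_inv_right[OF iA])
    \<comment> \<open>expand \<open>0 \<le> (y - a)\<^sup>* A (y - a)\<close> and bound \<open>y\<^sup>*Ay\<close> by \<open>y\<^sup>*By = y\<^sup>*x\<close>\<close>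
    have "0 \<le> Re (cdot (y - a) (A *v (y - a)))"
      using pos_def_imp_pos_semidef[OF A] by (simp add: pos_semidef_iff_cdot)
    also have "cdot (y - a) (A *v (y - a)) = cdot y (A *v y) - cdot y x - cnj (cdot y x) + cdot a x"
      by (simp add: matrix_vector_mult_diff_distrib cdot_diff_left cdot_diff_right Aa cnj_cdot
          cdot_matrix_vector_mult[of a A y] hA flip: Aa)
    finally have "0 \<le> Re (cdot y (A *v y)) - 2 * Re (cdot y x) + Re (cdot a x)" by simp
    moreover have "Re (cdot y (A *v y)) \<le> Re (cdot y (B *v y))"
      using BA by (simp add: pos_semidef_iff_cdot matrix_vector_mult_diff_rdistrib cdot_diff_right)
    moreover have "cdot y x = cdot x (matrix_inv B *v x)" "cdot a x = cdot x (matrix_inv A *v x)"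
      by (simp_all add: y_def a_def cdot_matrix_vector_mult hiA hiB)
    ultimately show ?thesis by (simp add: By)
  qed
  then show ?thesis
    by (simp add: pos_semidef_iff_cdot hermitian_def cmat_adj_diff hiA hiB
        matrix_vector_mult_diff_rdistrib cdot_diff_right)
qed

subsection \<open>Monotone sequences of positive matrices\<close>

lemma cdot_polarization:
  fixes M :: "complex^'n^'n"
  shows "cdot u (M *v v) = ((cdot (u+v) (M *v (u+v)) - cdot (u-v) (M *v (u-v)))
      - \<i> * (cdot (u + \<i> *s v) (M *v (u + \<i> *s v)) - cdot (u - \<i> *s v) (M *v (u - \<i> *s v)))) / 4"
proof -
  have "M *v (c *s w) = c *s (M *v w)" for c w
    by (simp add: matrix_vector_mult_def vec_eq_iff sum_distrib_left mult_ac)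
  then show ?thesis
    by (simp add: cdot_add_left cdot_add_right cdot_diff_left cdot_diff_right cdot_vector_smult_left
        cdot_vector_smult_right matrix_vector_right_distrib matrix_vector_mult_diff_distrib field_simps)
qed

lemma cdot_axis: "cdot (axis i 1) (M *v axis j 1) = (M::complex^'n^'n) $ i $ j"
proof -
  have "M *v axis j 1 = (\<chi> r. M $ r $ j)"
    by (simp add: matrix_vector_mult_def vec_eq_iff axis_def if_distrib if_distribR cong: if_cong)
  then show ?thesis by (simp add: cdot_def axis_def if_distrib if_distribR cong: if_cong)
qed

lemma convergent_if_quadratic_forms_convergent:
  fixes M :: "nat \<Rightarrow> complex^'n^'n"
  assumes "\<And>x. convergent (\<lambda>k. cdot x (M k *v x))"
  shows "convergent M"
proof -
  define q where "q x = lim (\<lambda>k. cdot x (M k *v x))" for x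
  have q: "(\<lambda>k. cdot x (M k *v x)) \<longlonglongrightarrow> q x" for x
    using assms[of x] by (simp add: q_def convergent_LIMSEQ_iff)
  define L where "L = (\<chi> i j. let u = axis i 1; v = axis j 1 in
      ((q (u+v) - q (u-v)) - \<i> * (q (u + \<i> *s v) - q (u - \<i> *s v))) / 4)"
  have "(\<lambda>k. cdot (axis i 1) (M k *v axis j 1)) \<longlonglongrightarrow> L $ i $ j" for i j
    unfolding cdot_polarization[of "axis i 1"] L_def Let_def by (simp, intro tendsto_intros q, simp)
  then have "(\<lambda>k. M k $ i $ j) \<longlonglongrightarrow> L $ i $ j" for i j
    by (simp add: cdot_axis)
  then have "M \<longlonglongrightarrow> L" by (intro vec_tendstoI)
  then show ?thesis by (rule convergentI)
qed

lemma pos_semidef_limit: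
  fixes M :: "nat \<Rightarrow> complex^'n^'n"
  assumes lim: "M \<longlonglongrightarrow> L" and psd: "\<And>k. pos_semidef (M k)"
  shows "pos_semidef L"
proof -
  have "(\<lambda>k. cmat_adj (M k) $ i $ j) \<longlonglongrightarrow> cmat_adj L $ i $ j" for i j
    unfolding cmat_adj_def by (simp, intro tendsto_intros lim)
  then have "(\<lambda>k. cmat_adj (M k)) \<longlonglongrightarrow> cmat_adj L"
    by (intro vec_tendstoI)
  moreover have "(\<lambda>k. cmat_adj (M k)) = M"
    using psd by (simp add: pos_semidef_def hermitian_def)
  ultimately have "cmat_adj L = L"
    using lim by (simp add: LIMSEQ_unique)
  moreover have "0 \<le> Re (cdot x (L *v x))" for x
  proof (rule LIMSEQ_le_const)
    show "(\<lambda>k. Re (cdot x (M k *v x))) \<longlonglongrightarrow> Re (cdot x (L *v x))"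
      unfolding cdot_def matrix_vector_mult_def by (intro tendsto_intros lim)
    show "\<exists>N. \<forall>k\<ge>N. 0 \<le> Re (cdot x (M k *v x))"
      using psd by (simp add: pos_semidef_iff_cdot)
  qed
  ultimately show ?thesis by (simp add: pos_semidef_iff_cdot hermitian_def)
qed

lemma pos_semidef_decseq_converges:
  fixes M :: "nat \<Rightarrow> complex^'n^'n"
  assumes psd: "\<And>k. pos_semidef (M k)" and dec: "\<And>k. pos_semidef (M k - M (Suc k))"
  shows "\<exists>L. M \<longlonglongrightarrow> L \<and> pos_semidef L"
proof -
  have "convergent (\<lambda>k. cdot x (M k *v x))" for x
  proof -
    have "decseq (\<lambda>k. Re (cdot x (M k *v x)))"
      using dec by (intro decseq_SucI)
        (simp add: pos_semidef_iff_cdot matrix_vector_mult_diff_rdistrib cdot_diff_right)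
    moreover have "\<forall>k. 0 \<le> Re (cdot x (M k *v x))"
      using psd by (simp add: pos_semidef_iff_cdot)
    ultimately have "convergent (\<lambda>k. Re (cdot x (M k *v x)))"
      by (metis convergent_def decseq_convergent)
    moreover have "(\<lambda>k. cdot x (M k *v x)) = (\<lambda>k. of_real (Re (cdot x (M k *v x))))"
      using psd by (intro ext hermitian_cdot_real) (simp add: pos_semidef_def)
    ultimately show ?thesis by (simp add: convergent_of_real)
  qed
  then obtain L where "M \<longlonglongrightarrow> L"
    using convergent_if_quadratic_forms_convergent convergent_def by blast
  then show ?thesis using pos_semidef_limit psd by blast
qed

lemma pos_def_incseq_inverse_converges:
  fixes M :: "nat \<Rightarrow> complex^'n^'n"
  assumes pd: "\<And>k. pos_def (M k)" and inc: "\<And>k. pos_semidef (M (Suc k) - M k)"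
  shows "\<exists>L. (\<lambda>k. matrix_inv (M k)) \<longlonglongrightarrow> L \<and> pos_semidef L"
proof (rule pos_semidef_decseq_converges)
  show "pos_semidef (matrix_inv (M k))" for k
    using pd by (simp add: pos_def_imp_pos_semidef pos_def_matrix_inv)
  show "pos_semidef (matrix_inv (M k) - matrix_inv (M (Suc k)))" for k
    using matrix_inv_antitone[OF pd pd inc] .
qed

lemma matrix_mult_jmat:
  "(P :: complex^('a::finite+'b::finite)^'n) ** jmat
     = (\<chi> r c. P $ r $ c * (case c of Inl _ \<Rightarrow> 1 | Inr _ \<Rightarrow> -1))"
proof -
  have "(P ** jmat) $ r $ c = P $ r $ c * (case c of Inl _ \<Rightarrow> 1 | Inr _ \<Rightarrow> -1)" for r c
  proof -
    have "(P ** jmat) $ r $ c = (\<Sum>k\<in>UNIV. P $ r $ k * jmat $ k $ c)"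
      by (simp add: matrix_matrix_mult_def)
    also have "\<dots> = (\<Sum>k\<in>UNIV. if k = c then P $ r $ c * (case c of Inl _ \<Rightarrow> 1 | Inr _ \<Rightarrow> -1) else 0)"
      by (rule sum.cong) (auto simp: jmat_def)
    finally show ?thesis by simp
  qed
  then show ?thesis by (simp add: vec_eq_iff)
qed

lemma jmat_mult_jmat: "(jmat :: complex^('a::finite+'b::finite)^('a+'b)) ** jmat = mat 1"
  unfolding matrix_mult_jmat by (auto simp: vec_eq_iff jmat_def mat_def split: sum.split)

lemma cmat_adj_jmat: "cmat_adj (jmat :: complex^('a::finite+'b::finite)^('a+'b)) = jmat"
  by (auto simp: cmat_adj_def jmat_def vec_eq_iff split: sum.split)

lemma block1_add: "block1 (P + Q) = block1 P + block1 Q"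
  by (simp add: block1_def vec_eq_iff)

lemma block2_add: "block2 (P + Q) = block2 P + block2 Q"
  by (simp add: block2_def vec_eq_iff)

lemma block1_smult: "block1 (cmat_smult c P) = cmat_smult c (block1 P)"
  by (simp add: block1_def cmat_smult_def vec_eq_iff)

lemma block2_smult: "block2 (cmat_smult c P) = cmat_smult c (block2 P)"
  by (simp add: block2_def cmat_smult_def vec_eq_iff)

lemma block1_mult: "block1 (M ** P) = M ** block1 P"
  by (simp add: block1_def matrix_matrix_mult_def vec_eq_iff)

lemma block2_mult: "block2 (M ** P) = M ** block2 P"
  by (simp add: block2_def matrix_matrix_mult_def vec_eq_iff)

lemma block1_mult_jmat: "block1 (M ** P ** jmat) = M ** block1 P"
  by (simp add: block1_def vec_eq_iff matrix_mult_jmat flip: block1_mult[unfolded block1_def])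

lemma block2_mult_jmat: "block2 (M ** P ** jmat) = - (M ** block2 P)"
  by (simp add: block2_def vec_eq_iff matrix_mult_jmat flip: block2_mult[unfolded block2_def])

lemma join_blocks_block1_block2: "join_blocks (block1 P) (block2 P) = P"
  by (simp add: join_blocks_def block1_def block2_def vec_eq_iff split: sum.split)

lemma sum_UNIV_Plus:
  "(\<Sum>c\<in>(UNIV::('a::finite+'b::finite) set). f c) = (\<Sum>a\<in>UNIV. f (Inl a)) + (\<Sum>b\<in>UNIV. f (Inr b))"
  by (subst UNIV_Plus_UNIV[symmetric], subst sum.Plus) (simp_all add: o_def)

lemma gram_minus_signature:
  "(P :: complex^('a::finite+'b::finite)^'n) ** cmat_adj P - P ** jmat ** cmat_adj P
     = cmat_smult 2 (block2 P ** cmat_adj (block2 P))"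
  unfolding matrix_mult_jmat
  by (simp add: vec_eq_iff matrix_matrix_mult_def cmat_adj_def cmat_smult_def block2_def
      sum_UNIV_Plus sum_subtractf[symmetric] sum_distrib_left algebra_simps)

lemma gram_plus_signature:
  "(P :: complex^('a::finite+'b::finite)^'n) ** cmat_adj P + P ** jmat ** cmat_adj P
     = cmat_smult 2 (block1 P ** cmat_adj (block1 P))"
  unfolding matrix_mult_jmat
  by (simp add: vec_eq_iff matrix_matrix_mult_def cmat_adj_def cmat_smult_def block1_def
      sum_UNIV_Plus sum.distrib[symmetric] sum_distrib_left algebra_simps)

subsection \<open>The sequences \<open>\<Pi>\<^sub>k\<close> and \<open>S\<^sub>k\<close>\<close>

lemma admissible_tripleD:
  assumes "admissible_triple A S0 Pi0"
  shows "invertible A" and "pos_def S0"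
    and "A ** S0 - S0 ** cmat_adj A = cmat_smult \<i> (Pi0 ** jmat ** cmat_adj Pi0)"
  using assms invertible_det_nz by (auto simp: admissible_triple_def)

lemma block1_Pi_seq: "block1 (Pi_seq A Pi0 k) = cmat_pow (Bp A) k ** block1 Pi0"
proof (induction k)
  case (Suc k)
  have "block1 (Pi_seq A Pi0 (Suc k)) = Bp A ** block1 (Pi_seq A Pi0 k)"
    by (simp add: block1_add block1_smult block1_mult_jmat Bp_def matrix_add_rdistrib
        cmat_smult_mult_left)
  then show ?case by (simp add: Suc.IH cmat_pow_commute matrix_mul_assoc)
qed simp

lemma block2_Pi_seq: "block2 (Pi_seq A Pi0 k) = cmat_pow (Bm A) k ** block2 Pi0"
proof (induction k)
  case (Suc k)
  have "block2 (Pi_seq A Pi0 (Suc k)) = Bm A ** block2 (Pi_seq A Pi0 k)"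
    by (simp add: block2_add block2_smult block2_mult_jmat Bm_def matrix_diff_rdistrib
        cmat_smult_mult_left cmat_smult_uminus)
  then show ?case by (simp add: Suc.IH cmat_pow_commute matrix_mul_assoc)
qed simp

lemma Pi_seq_eq_join_blocks:
  "Pi_seq A Pi0 k = join_blocks (cmat_pow (Bp A) k ** block1 Pi0) (cmat_pow (Bm A) k ** block2 Pi0)"
  by (simp add: join_blocks_block1_block2 flip: block1_Pi_seq block2_Pi_seq)

lemma matrix_mul_cancel_right: "A ** B = mat 1 \<Longrightarrow> M ** A ** B = M"
  by (simp flip: matrix_mul_assoc)

lemma inverse_commutator:
  fixes A X S :: "complex^'n^'n"
  assumes XA: "X ** A = mat 1"
  shows "S ** cmat_adj X - X ** S = X ** (A ** S - S ** cmat_adj A) ** cmat_adj X"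
proof -
  have "cmat_adj A ** cmat_adj X = mat 1" using XA by (metis cmat_adj_mult cmat_adj_mat_1)
  then show ?thesis
    by (simp add: matrix_diff_ldistrib matrix_diff_rdistrib matrix_mul_assoc XA matrix_mul_cancel_right)
qed

lemma Lyapunov_identity_step:
  fixes A X S :: "complex^'n^'n" and P :: "complex^('a::finite+'b::finite)^'n"
  assumes XA: "X ** A = mat 1" and AX: "A ** X = mat 1"
    and L: "A ** S - S ** cmat_adj A = cmat_smult \<i> (P ** jmat ** cmat_adj P)"
  defines "S' \<equiv> S + X ** S ** cmat_adj X + X ** P ** cmat_adj P ** cmat_adj X"
    and "P' \<equiv> P + cmat_smult \<i> (X ** P ** jmat)"
  shows "A ** S' - S' ** cmat_adj A = cmat_smult \<i> (P' ** jmat ** cmat_adj P')"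
proof -
  have "cmat_adj X ** cmat_adj A = mat 1" using AX by (metis cmat_adj_mult cmat_adj_mat_1)
  then have "A ** S' - S' ** cmat_adj A = (A ** S - S ** cmat_adj A) + (S ** cmat_adj X - X ** S)
      + (P ** cmat_adj P ** cmat_adj X - X ** P ** cmat_adj P)"
    by (simp add: S'_def matrix_add_ldistrib matrix_add_rdistrib matrix_mul_assoc AX
        matrix_mul_cancel_right algebra_simps)
  also have "\<dots> = cmat_smult \<i> (P ** jmat ** cmat_adj P) + X ** cmat_smult \<i> (P ** jmat ** cmat_adj P) ** cmat_adj X
      + (P ** cmat_adj P ** cmat_adj X - X ** P ** cmat_adj P)"
    by (simp only: inverse_commutator[OF XA] L)
  also have "\<dots> = cmat_smult \<i> (P' ** jmat ** cmat_adj P')"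
    by (simp add: P'_def cmat_adj_add cmat_adj_smult cmat_adj_mult cmat_adj_jmat matrix_add_ldistrib
        matrix_add_rdistrib cmat_smult_mult_left cmat_smult_mult_right cmat_smult_smult cmat_smult_add
        matrix_mul_assoc jmat_mult_jmat matrix_mul_cancel_right algebra_simps)
  finally show ?thesis .
qed

lemma S_seq_Suc_adj_inv:
  assumes "invertible A"
  shows "S_seq A S0 Pi0 (Suc k) = S_seq A S0 Pi0 k
     + matrix_inv A ** S_seq A S0 Pi0 k ** cmat_adj (matrix_inv A)
     + matrix_inv A ** Pi_seq A Pi0 k ** cmat_adj (Pi_seq A Pi0 k) ** cmat_adj (matrix_inv A)"
  by (simp add: matrix_inv_cmat_adj[OF assms])

lemma S_seq_Lyapunov:
  assumes "admissible_triple A S0 Pi0"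
  shows "A ** S_seq A S0 Pi0 k - S_seq A S0 Pi0 k ** cmat_adj A
     = cmat_smult \<i> (Pi_seq A Pi0 k ** jmat ** cmat_adj (Pi_seq A Pi0 k))"
proof (induction k)
  case 0
  then show ?case using admissible_tripleD(3)[OF assms] by simp
next
  case (Suc k)
  have "invertible A" using admissible_tripleD(1)[OF assms] .
  then show ?case
    using Lyapunov_identity_step[OF matrix_inv_left matrix_inv_right Suc.IH]
    by (simp only: S_seq_Suc_adj_inv Pi_seq.simps)
qed

lemma pos_def_S_seq:
  assumes "admissible_triple A S0 Pi0"
  shows "pos_def (S_seq A S0 Pi0 k)"
proof (induction k)
  case 0
  then show ?case using admissible_tripleD(2)[OF assms] by simp
next
  case (Suc k)
  let ?X = "matrix_inv A" and ?P = "Pi_seq A Pi0 k"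
  have "pos_semidef (?X ** ?P ** cmat_adj ?P ** cmat_adj ?X)"
    using pos_semidef_gram[of "?X ** ?P"] by (simp add: cmat_adj_mult matrix_mul_assoc)
  moreover have "pos_semidef (?X ** S_seq A S0 Pi0 k ** cmat_adj ?X)"
    using pos_semidef_congruence[OF pos_def_imp_pos_semidef[OF Suc.IH]] .
  ultimately show ?case
    using Suc.IH unfolding S_seq_Suc_adj_inv[OF admissible_tripleD(1)[OF assms]]
    by (blast intro: pos_def_add_pos_semidef)
qed

lemma congruence_one_plus_i_smult:
  "(mat 1 + cmat_smult \<i> X) ** S ** cmat_adj (mat 1 + cmat_smult \<i> X)
     = S + X ** S ** cmat_adj X + cmat_smult \<i> (X ** S - S ** cmat_adj X)"
  by (simp add: cmat_adj_add cmat_adj_smult matrix_add_ldistrib matrix_add_rdistrib matrix_diff_ldistrib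
      matrix_diff_rdistrib cmat_smult_mult_left
      cmat_smult_mult_right cmat_smult_smult cmat_smult_add cmat_smult_diff cmat_smult_minus_scalar matrix_mul_assoc
      algebra_simps)

lemma congruence_one_minus_i_smult:
  "(mat 1 - cmat_smult \<i> X) ** S ** cmat_adj (mat 1 - cmat_smult \<i> X)
     = S + X ** S ** cmat_adj X - cmat_smult \<i> (X ** S - S ** cmat_adj X)"
  by (simp add: cmat_adj_diff cmat_adj_smult matrix_diff_ldistrib matrix_diff_rdistrib matrix_add_ldistrib
      matrix_add_rdistrib cmat_smult_mult_left
      cmat_smult_mult_right cmat_smult_smult cmat_smult_add cmat_smult_diff cmat_smult_minus_scalar matrix_mul_assoc
      algebra_simps)

lemma Lyapunov_commutator:
  fixes A X S :: "complex^'n^'n" and P :: "complex^('a::finite+'b::finite)^'n"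
  assumes XA: "X ** A = mat 1"
    and L: "A ** S - S ** cmat_adj A = cmat_smult \<i> (P ** jmat ** cmat_adj P)"
  shows "cmat_smult \<i> (X ** S - S ** cmat_adj X) = X ** (P ** jmat ** cmat_adj P) ** cmat_adj X"
proof -
  have "S ** cmat_adj X - X ** S = cmat_smult \<i> (X ** (P ** jmat ** cmat_adj P) ** cmat_adj X)"
    by (simp add: inverse_commutator[OF XA] L cmat_smult_mult_left cmat_smult_mult_right)
  then have "X ** S - S ** cmat_adj X = - cmat_smult \<i> (X ** (P ** jmat ** cmat_adj P) ** cmat_adj X)"
    by (metis minus_diff_eq)
  then show ?thesis by (simp add: cmat_smult_uminus cmat_smult_smult)
qed

lemma Lyapunov_update_plus:
  fixes A X S :: "complex^'n^'n" and P :: "complex^('a::finite+'b::finite)^'n"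
  assumes XA: "X ** A = mat 1"
    and L: "A ** S - S ** cmat_adj A = cmat_smult \<i> (P ** jmat ** cmat_adj P)"
  shows "S + X ** S ** cmat_adj X + X ** P ** cmat_adj P ** cmat_adj X
     = (mat 1 + cmat_smult \<i> X) ** S ** cmat_adj (mat 1 + cmat_smult \<i> X)
       + cmat_smult 2 ((X ** block2 P) ** cmat_adj (X ** block2 P))"
proof -
  have "P ** cmat_adj P = P ** jmat ** cmat_adj P + cmat_smult 2 (block2 P ** cmat_adj (block2 P))"
    using gram_minus_signature[of P] by (simp add: diff_eq_eq add.commute)
  then have "X ** P ** cmat_adj P ** cmat_adj X
      = X ** (P ** jmat ** cmat_adj P) ** cmat_adj X + cmat_smult 2 ((X ** block2 P) ** cmat_adj (X ** block2 P))"
    by (simp add: matrix_add_ldistrib matrix_add_rdistrib cmat_smult_mult_left cmat_smult_mult_right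
        cmat_adj_mult flip: matrix_mul_assoc)
  then show ?thesis
    by (simp add: congruence_one_plus_i_smult Lyapunov_commutator[OF XA L])
qed

lemma Lyapunov_update_minus:
  fixes A X S :: "complex^'n^'n" and P :: "complex^('a::finite+'b::finite)^'n"
  assumes XA: "X ** A = mat 1"
    and L: "A ** S - S ** cmat_adj A = cmat_smult \<i> (P ** jmat ** cmat_adj P)"
  shows "S + X ** S ** cmat_adj X + X ** P ** cmat_adj P ** cmat_adj X
     = (mat 1 - cmat_smult \<i> X) ** S ** cmat_adj (mat 1 - cmat_smult \<i> X)
       + cmat_smult 2 ((X ** block1 P) ** cmat_adj (X ** block1 P))"
proof -
  have "P ** cmat_adj P = cmat_smult 2 (block1 P ** cmat_adj (block1 P)) - P ** jmat ** cmat_adj P"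
    using gram_plus_signature[of P] by (simp add: eq_diff_eq)
  then have "X ** P ** cmat_adj P ** cmat_adj X
      = cmat_smult 2 ((X ** block1 P) ** cmat_adj (X ** block1 P)) - X ** (P ** jmat ** cmat_adj P) ** cmat_adj X"
    by (simp add: matrix_diff_ldistrib matrix_diff_rdistrib cmat_smult_mult_left cmat_smult_mult_right
        cmat_adj_mult flip: matrix_mul_assoc)
  then show ?thesis
    by (simp add: congruence_one_minus_i_smult Lyapunov_commutator[OF XA L])
qed

lemma S_seq_Suc_Bp:
  assumes "admissible_triple A S0 Pi0"
  shows "S_seq A S0 Pi0 (Suc k) = Bp A ** S_seq A S0 Pi0 k ** cmat_adj (Bp A)
     + cmat_smult 2 ((matrix_inv A ** block2 (Pi_seq A Pi0 k)) ** cmat_adj (matrix_inv A ** block2 (Pi_seq A Pi0 k)))"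
  unfolding S_seq_Suc_adj_inv[OF admissible_tripleD(1)[OF assms]] Bp_def
  by (rule Lyapunov_update_plus[OF matrix_inv_left[OF admissible_tripleD(1)[OF assms]] S_seq_Lyapunov[OF assms]])

lemma S_seq_Suc_Bm:
  assumes "admissible_triple A S0 Pi0"
  shows "S_seq A S0 Pi0 (Suc k) = Bm A ** S_seq A S0 Pi0 k ** cmat_adj (Bm A)
     + cmat_smult 2 ((matrix_inv A ** block1 (Pi_seq A Pi0 k)) ** cmat_adj (matrix_inv A ** block1 (Pi_seq A Pi0 k)))"
  unfolding S_seq_Suc_adj_inv[OF admissible_tripleD(1)[OF assms]] Bm_def
  by (rule Lyapunov_update_minus[OF matrix_inv_left[OF admissible_tripleD(1)[OF assms]] S_seq_Lyapunov[OF assms]])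

subsection \<open>The sequences \<open>R\<^sub>k\<close> and \<open>Q\<^sub>k\<close>\<close>

lemma invertible_Bp:
  assumes A: "invertible A" and spec: "- \<i> \<notin> cmat_spectrum A"
  shows "invertible (Bp A)"
proof -
  have "Bp A = matrix_inv A ** (A + cmat_smult \<i> (mat 1))"
    by (simp add: Bp_def matrix_add_ldistrib matrix_inv_left[OF A] cmat_smult_mult_right)
  moreover have "invertible (A + cmat_smult \<i> (mat 1))"
    using spec by (simp add: cmat_spectrum_def invertible_det_nz cmat_smult_minus_scalar)
  ultimately show ?thesis using invertible_matrix_inv[OF A] invertible_mult by metis
qed

lemma invertible_Bm:
  assumes A: "invertible A" and spec: "\<i> \<notin> cmat_spectrum A"
  shows "invertible (Bm A)"
proof -
  have "Bm A = matrix_inv A ** (A - cmat_smult \<i> (mat 1))"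
    by (simp add: Bm_def matrix_diff_ldistrib matrix_inv_left[OF A] cmat_smult_mult_right)
  moreover have "invertible (A - cmat_smult \<i> (mat 1))"
    using spec by (simp add: cmat_spectrum_def invertible_det_nz)
  ultimately show ?thesis using invertible_matrix_inv[OF A] invertible_mult by metis
qed

lemma R_seq_eq_congruence:
  assumes "invertible A" "- \<i> \<notin> cmat_spectrum A"
  shows "R_seq A S0 Pi0 k = matrix_inv (cmat_pow (Bp A) k) ** S_seq A S0 Pi0 k
     ** cmat_adj (matrix_inv (cmat_pow (Bp A) k))"
proof -
  have "mat 1 - cmat_smult \<i> (matrix_inv (cmat_adj A)) = cmat_adj (Bp A)"
    by (simp add: Bp_def cmat_adj_add cmat_adj_smult matrix_inv_cmat_adj[OF assms(1)]
        cmat_smult_minus_scalar)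
  then show ?thesis
    by (simp add: R_seq_def cmat_pow_adj matrix_inv_cmat_adj invertible_cmat_pow invertible_Bp assms)
qed

lemma Q_seq_eq_congruence:
  assumes "invertible A" "\<i> \<notin> cmat_spectrum A"
  shows "Q_seq A S0 Pi0 k = matrix_inv (cmat_pow (Bm A) k) ** S_seq A S0 Pi0 k
     ** cmat_adj (matrix_inv (cmat_pow (Bm A) k))"
proof -
  have "mat 1 + cmat_smult \<i> (matrix_inv (cmat_adj A)) = cmat_adj (Bm A)"
    by (simp add: Bm_def cmat_adj_diff cmat_adj_smult matrix_inv_cmat_adj[OF assms(1)]
        cmat_smult_minus_scalar)
  then show ?thesis
    by (simp add: Q_seq_def cmat_pow_adj matrix_inv_cmat_adj invertible_cmat_pow invertible_Bm assms)
qed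

lemma inverse_power_congruence_Suc:
  fixes B S :: "complex^'n^'n"
  assumes "invertible B"
  shows "matrix_inv (cmat_pow B (Suc k)) ** (B ** S ** cmat_adj B) ** cmat_adj (matrix_inv (cmat_pow B (Suc k)))
     = matrix_inv (cmat_pow B k) ** S ** cmat_adj (matrix_inv (cmat_pow B k))"
proof -
  have "matrix_inv (cmat_pow B (Suc k)) = matrix_inv (cmat_pow B k) ** matrix_inv B"
    using assms by (simp add: cmat_pow_commute matrix_inv_mult invertible_cmat_pow)
  then have "matrix_inv (cmat_pow B (Suc k)) ** B = matrix_inv (cmat_pow B k)"
    by (simp add: matrix_inv_left[OF assms] flip: matrix_mul_assoc)
  then show ?thesis by (metis cmat_adj_mult matrix_mul_assoc)
qed

lemma R_seq_Suc_diff: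
  fixes k :: nat
  assumes adm: "admissible_triple A S0 Pi0" and spec: "- \<i> \<notin> cmat_spectrum A"
  defines "C \<equiv> matrix_inv (cmat_pow (Bp A) (Suc k)) ** matrix_inv A ** block2 (Pi_seq A Pi0 k)"
  shows "R_seq A S0 Pi0 (Suc k) - R_seq A S0 Pi0 k = cmat_smult 2 (C ** cmat_adj C)"
proof -
  have A: "invertible A" using admissible_tripleD(1)[OF adm] .
  let ?N = "matrix_inv (cmat_pow (Bp A) (Suc k))" and ?Y = "matrix_inv A ** block2 (Pi_seq A Pi0 k)"
  have "R_seq A S0 Pi0 (Suc k) = ?N ** (Bp A ** S_seq A S0 Pi0 k ** cmat_adj (Bp A)) ** cmat_adj ?N
      + ?N ** cmat_smult 2 (?Y ** cmat_adj ?Y) ** cmat_adj ?N"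
    by (simp only: R_seq_eq_congruence[OF A spec] S_seq_Suc_Bp[OF adm] matrix_add_ldistrib
        matrix_add_rdistrib)
  also have "\<dots> = R_seq A S0 Pi0 k + cmat_smult 2 (C ** cmat_adj C)"
    by (simp only: inverse_power_congruence_Suc[OF invertible_Bp[OF A spec]] R_seq_eq_congruence[OF A spec])
      (simp add: cmat_smult_mult_left cmat_smult_mult_right cmat_adj_mult matrix_mul_assoc C_def)
  finally show ?thesis by simp
qed

lemma Q_seq_Suc_diff:
  fixes k :: nat
  assumes adm: "admissible_triple A S0 Pi0" and spec: "\<i> \<notin> cmat_spectrum A"
  defines "C \<equiv> matrix_inv (cmat_pow (Bm A) (Suc k)) ** matrix_inv A ** block1 (Pi_seq A Pi0 k)"
  shows "Q_seq A S0 Pi0 (Suc k) - Q_seq A S0 Pi0 k = cmat_smult 2 (C ** cmat_adj C)"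
proof -
  have A: "invertible A" using admissible_tripleD(1)[OF adm] .
  let ?N = "matrix_inv (cmat_pow (Bm A) (Suc k))" and ?Y = "matrix_inv A ** block1 (Pi_seq A Pi0 k)"
  have "Q_seq A S0 Pi0 (Suc k) = ?N ** (Bm A ** S_seq A S0 Pi0 k ** cmat_adj (Bm A)) ** cmat_adj ?N
      + ?N ** cmat_smult 2 (?Y ** cmat_adj ?Y) ** cmat_adj ?N"
    by (simp only: Q_seq_eq_congruence[OF A spec] S_seq_Suc_Bm[OF adm] matrix_add_ldistrib
        matrix_add_rdistrib)
  also have "\<dots> = Q_seq A S0 Pi0 k + cmat_smult 2 (C ** cmat_adj C)"
    by (simp only: inverse_power_congruence_Suc[OF invertible_Bm[OF A spec]] Q_seq_eq_congruence[OF A spec])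
      (simp add: cmat_smult_mult_left cmat_smult_mult_right cmat_adj_mult matrix_mul_assoc C_def)
  finally show ?thesis by simp
qed

lemma pos_def_R_seq:
  assumes "admissible_triple A S0 Pi0" "- \<i> \<notin> cmat_spectrum A"
  shows "pos_def (R_seq A S0 Pi0 k)"
  using admissible_tripleD(1)[OF assms(1)] assms
  by (simp add: R_seq_eq_congruence pos_def_congruence pos_def_S_seq invertible_matrix_inv
      invertible_cmat_pow invertible_Bp)

lemma pos_def_Q_seq:
  assumes "admissible_triple A S0 Pi0" "\<i> \<notin> cmat_spectrum A"
  shows "pos_def (Q_seq A S0 Pi0 k)"
  using admissible_tripleD(1)[OF assms(1)] assms
  by (simp add: Q_seq_eq_congruence pos_def_congruence pos_def_S_seq invertible_matrix_inv
      invertible_cmat_pow invertible_Bm)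

theorem mainTheorem3:
  fixes A S0 :: "complex^'n^'n" and Pi0 :: "complex^('m1::finite + 'm2::finite)^'n"
  assumes adm: "admissible_triple A S0 Pi0"
    and spec: "\<i> \<notin> cmat_spectrum A" "- \<i> \<notin> cmat_spectrum A"
  shows "(\<forall>k. Pi_seq A Pi0 k =
            join_blocks (cmat_pow (Bp A) k ** block1 Pi0) (cmat_pow (Bm A) k ** block2 Pi0))
    \<and> (\<forall>k. R_seq A S0 Pi0 (Suc k) - R_seq A S0 Pi0 k =
            cmat_smult 2 (matrix_inv (cmat_pow (Bp A) (Suc k)) ** matrix_inv A
              ** cmat_pow (Bm A) k ** block2 Pi0 ** cmat_adj (block2 Pi0)
              ** cmat_adj (cmat_pow (Bm A) k) ** cmat_adj (matrix_inv A)
              ** cmat_adj (matrix_inv (cmat_pow (Bp A) (Suc k))))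
          \<and> pos_semidef (R_seq A S0 Pi0 (Suc k) - R_seq A S0 Pi0 k))
    \<and> (\<forall>k. pos_semidef (Q_seq A S0 Pi0 (Suc k) - Q_seq A S0 Pi0 k))
    \<and> (\<exists>\<kappa>R. (\<lambda>k. matrix_inv (R_seq A S0 Pi0 k)) \<longlonglongrightarrow> \<kappa>R \<and> pos_semidef \<kappa>R)
    \<and> (\<exists>\<kappa>Q. (\<lambda>k. matrix_inv (Q_seq A S0 Pi0 k)) \<longlonglongrightarrow> \<kappa>Q \<and> pos_semidef \<kappa>Q)"
proof (intro conjI allI)
  fix k
  show "Pi_seq A Pi0 k =
      join_blocks (cmat_pow (Bp A) k ** block1 Pi0) (cmat_pow (Bm A) k ** block2 Pi0)"
    by (rule Pi_seq_eq_join_blocks)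
  show "R_seq A S0 Pi0 (Suc k) - R_seq A S0 Pi0 k =
      cmat_smult 2 (matrix_inv (cmat_pow (Bp A) (Suc k)) ** matrix_inv A
        ** cmat_pow (Bm A) k ** block2 Pi0 ** cmat_adj (block2 Pi0)
        ** cmat_adj (cmat_pow (Bm A) k) ** cmat_adj (matrix_inv A)
        ** cmat_adj (matrix_inv (cmat_pow (Bp A) (Suc k))))"
    by (simp add: R_seq_Suc_diff[OF adm spec(2)] block2_Pi_seq cmat_adj_mult matrix_mul_assoc)
  show "pos_semidef (R_seq A S0 Pi0 (Suc k) - R_seq A S0 Pi0 k)"
    unfolding R_seq_Suc_diff[OF adm spec(2)] by (rule pos_semidef_double_gram)
  show "pos_semidef (Q_seq A S0 Pi0 (Suc k) - Q_seq A S0 Pi0 k)"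
    unfolding Q_seq_Suc_diff[OF adm spec(1)] by (rule pos_semidef_double_gram)
  show "\<exists>\<kappa>R. (\<lambda>k. matrix_inv (R_seq A S0 Pi0 k)) \<longlonglongrightarrow> \<kappa>R \<and> pos_semidef \<kappa>R"
    using pos_def_R_seq[OF adm spec(2)] R_seq_Suc_diff[OF adm spec(2)]
    by (intro pos_def_incseq_inverse_converges) (simp_all add: pos_semidef_double_gram)
  show "\<exists>\<kappa>Q. (\<lambda>k. matrix_inv (Q_seq A S0 Pi0 k)) \<longlonglongrightarrow> \<kappa>Q \<and> pos_semidef \<kappa>Q"
    using pos_def_Q_seq[OF adm spec(1)] Q_seq_Suc_diff[OF adm spec(1)]
    by (intro pos_def_incseq_inverse_converges) (simp_all add: pos_semidef_double_gram)
qed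

end
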